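(* Let $G$ be a finite $p$-group with trivial Schur multiplier $\mathrm{H}^2(G,\mathbb{C}^\times)=1$ and $|Z(G)|=p$. Then $G$ has no faithful irreducible projective representation (so $\tau_{irr}(G)$ does not exist), and $\tau(G)=\delta(G)+1$.
   Context: A projective representation of $G$ is an $\alpha$-representation for some cocycle $\alpha$: a map $\rho:G\to\mathrm{GL}_n(\mathbb{C})$ with $\rho(1)=I$ and $\rho(g)\rho(h)=\alpha(g,h)\rho(gh)$; it is faithful if the only $g$ with $\rho(g)$ scalar is $g=1$. $\tau(G)$ is the least degree of a faithful projective representation; $\tau_{irr}(G)$ the least degree of a faithful irreducible projective representation (if one exists); $\delta(G)$ the least degree of a faithful ordinary representation. *)

theory Defs
  imports "HOL-Algebra.Group" "Jordan_Normal_Form.Matrix"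
begin

definition grp_center :: "('a, 'b) monoid_scheme \<Rightarrow> 'a set" where
  "grp_center G = {z \<in> carrier G. \<forall>g \<in> carrier G. z \<otimes>\<^bsub>G\<^esub> g = g \<otimes>\<^bsub>G\<^esub> z}"

definition p_group :: "('a, 'b) monoid_scheme \<Rightarrow> nat \<Rightarrow> bool" where
  "p_group G p \<longleftrightarrow> group G \<and> finite (carrier G) \<and> prime p \<and> (\<exists>k. card (carrier G) = p ^ k)"

definition cocycle :: "('a, 'b) monoid_scheme \<Rightarrow> ('a \<Rightarrow> 'a \<Rightarrow> complex) \<Rightarrow> bool" where
  "cocycle G \<alpha> \<longleftrightarrow>
     (\<forall>g \<in> carrier G. \<forall>h \<in> carrier G. \<alpha> g h \<noteq> 0) \<and>
     (\<forall>g \<in> carrier G. \<forall>h \<in> carrier G. \<forall>k \<in> carrier G.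
        \<alpha> g h * \<alpha> (g \<otimes>\<^bsub>G\<^esub> h) k = \<alpha> h k * \<alpha> g (h \<otimes>\<^bsub>G\<^esub> k))"

definition coboundary :: "('a, 'b) monoid_scheme \<Rightarrow> ('a \<Rightarrow> 'a \<Rightarrow> complex) \<Rightarrow> bool" where
  "coboundary G \<alpha> \<longleftrightarrow>
     (\<exists>\<beta>. (\<forall>g \<in> carrier G. \<beta> g \<noteq> 0) \<and>
          (\<forall>g \<in> carrier G. \<forall>h \<in> carrier G. \<alpha> g h = \<beta> g * \<beta> h / \<beta> (g \<otimes>\<^bsub>G\<^esub> h)))"

definition trivial_schur_multiplier :: "('a, 'b) monoid_scheme \<Rightarrow> bool" where
  "trivial_schur_multiplier G \<longleftrightarrow> (\<forall>\<alpha>. cocycle G \<alpha> \<longrightarrow> coboundary G \<alpha>)"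

definition alpha_rep ::
  "('a, 'b) monoid_scheme \<Rightarrow> ('a \<Rightarrow> 'a \<Rightarrow> complex) \<Rightarrow> nat \<Rightarrow> ('a \<Rightarrow> complex mat) \<Rightarrow> bool" where
  "alpha_rep G \<alpha> n \<rho> \<longleftrightarrow>
     cocycle G \<alpha> \<and>
     (\<forall>g \<in> carrier G. \<rho> g \<in> carrier_mat n n \<and> invertible_mat (\<rho> g)) \<and>
     \<rho> \<one>\<^bsub>G\<^esub> = 1\<^sub>m n \<and>
     (\<forall>g \<in> carrier G. \<forall>h \<in> carrier G. \<rho> g * \<rho> h = \<alpha> g h \<cdot>\<^sub>m \<rho> (g \<otimes>\<^bsub>G\<^esub> h))"

definition proj_rep :: "('a, 'b) monoid_scheme \<Rightarrow> nat \<Rightarrow> ('a \<Rightarrow> complex mat) \<Rightarrow> bool" where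
  "proj_rep G n \<rho> \<longleftrightarrow> n \<ge> 1 \<and> (\<exists>\<alpha>. alpha_rep G \<alpha> n \<rho>)"

definition faithful_proj :: "('a, 'b) monoid_scheme \<Rightarrow> nat \<Rightarrow> ('a \<Rightarrow> complex mat) \<Rightarrow> bool" where
  "faithful_proj G n \<rho> \<longleftrightarrow>
     (\<forall>g \<in> carrier G. (\<exists>c. \<rho> g = c \<cdot>\<^sub>m 1\<^sub>m n) \<longrightarrow> g = \<one>\<^bsub>G\<^esub>)"

definition invariant_subspace :: "('a, 'b) monoid_scheme \<Rightarrow> nat \<Rightarrow> ('a \<Rightarrow> complex mat) \<Rightarrow> complex vec set \<Rightarrow> bool" where
  "invariant_subspace G n \<rho> W \<longleftrightarrow>
     W \<subseteq> carrier_vec n \<and> 0\<^sub>v n \<in> W \<and>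
     (\<forall>v \<in> W. \<forall>w \<in> W. v + w \<in> W) \<and>
     (\<forall>c. \<forall>v \<in> W. c \<cdot>\<^sub>v v \<in> W) \<and>
     (\<forall>g \<in> carrier G. \<forall>v \<in> W. \<rho> g *\<^sub>v v \<in> W)"

definition irreducible_rep :: "('a, 'b) monoid_scheme \<Rightarrow> nat \<Rightarrow> ('a \<Rightarrow> complex mat) \<Rightarrow> bool" where
  "irreducible_rep G n \<rho> \<longleftrightarrow> n \<ge> 1 \<and>
     (\<forall>W. invariant_subspace G n \<rho> W \<longrightarrow> W = {0\<^sub>v n} \<or> W = carrier_vec n)"

definition ord_rep :: "('a, 'b) monoid_scheme \<Rightarrow> nat \<Rightarrow> ('a \<Rightarrow> complex mat) \<Rightarrow> bool" where
  "ord_rep G n \<rho> \<longleftrightarrow> n \<ge> 1 \<and>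
     (\<forall>g \<in> carrier G. \<rho> g \<in> carrier_mat n n) \<and>
     \<rho> \<one>\<^bsub>G\<^esub> = 1\<^sub>m n \<and>
     (\<forall>g \<in> carrier G. \<forall>h \<in> carrier G. \<rho> (g \<otimes>\<^bsub>G\<^esub> h) = \<rho> g * \<rho> h)"

definition faithful_ord :: "('a, 'b) monoid_scheme \<Rightarrow> nat \<Rightarrow> ('a \<Rightarrow> complex mat) \<Rightarrow> bool" where
  "faithful_ord G n \<rho> \<longleftrightarrow> (\<forall>g \<in> carrier G. \<rho> g = 1\<^sub>m n \<longrightarrow> g = \<one>\<^bsub>G\<^esub>)"

definition tau :: "('a, 'b) monoid_scheme \<Rightarrow> nat" where
  "tau G = (LEAST n. \<exists>\<rho>. proj_rep G n \<rho> \<and> faithful_proj G n \<rho>)"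

definition delta :: "('a, 'b) monoid_scheme \<Rightarrow> nat" where
  "delta G = (LEAST n. \<exists>\<rho>. ord_rep G n \<rho> \<and> faithful_ord G n \<rho>)"

end

(* Let Z be the centre of G and z \<in> Z with z \<noteq> 1. Counting fixed points of conjugation modulo p
   shows that every nontrivial normal subgroup of the p-group G meets Z nontrivially, hence
   contains Z since |Z| = p; so an ordinary representation whose kernel misses z is faithful.

   As H^2(G, C^x) = 1, every projective representation is a pointwise rescaling of an ordinary
   one, sigma. If it is irreducible, Schur's lemma makes sigma(z) scalar, so it is not faithful.
   Adding a trivial summand to a faithful ordinary representation gives a faithful projective
   one, so tau <= delta + 1. Conversely, if the projective representation is faithful then
   sigma(z) is not scalar; being of finite order it is diagonalisable, and G preserves its
   eigenspaces. On an eigenspace for an eigenvalue c \<noteq> 1 the element z acts by c, so the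
   restriction of sigma is faithful of degree < tau, whence delta < tau. *)

theory Submission
  imports
    Defs
    "HOL-Algebra.Group_Action"
    "HOL-Algebra.Multiplicative_Group"
    "Jordan_Normal_Form.Jordan_Normal_Form_Existence"
    "Jordan_Normal_Form.Spectral_Radius"
    "Jordan_Normal_Form.DL_Submatrix"
begin

section \<open>p-groups\<close>

lemma (in group_action) card_orbit_dvd_order:
  "x \<in> E \<Longrightarrow> card (orbit G \<phi> x) dvd Coset.order G"
  using orbit_stabilizer_theorem by (metis dvd_triv_left)

lemma (in group_action) p_dvd_card_orbit:
  assumes p: "prime p" and order: "Coset.order G = p ^ k"
    and x: "x \<in> E" and g: "g \<in> carrier G" "\<phi> g x \<noteq> x"
  shows "p dvd card (orbit G \<phi> x)"
proof -
  have "card (orbit G \<phi> x) \<noteq> 1"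
  proof
    assume "card (orbit G \<phi> x) = 1"
    moreover have "x \<in> orbit G \<phi> x" "\<phi> g x \<in> orbit G \<phi> x"
      using orbit_refl[OF x] g unfolding orbit_def by auto
    ultimately show False using g(2) by (metis card_1_singletonE singletonD)
  qed
  moreover obtain j where "card (orbit G \<phi> x) = p ^ j"
    using card_orbit_dvd_order[OF x] order p divides_primepow_nat by auto
  ultimately show ?thesis by (cases j) auto
qed

lemma (in group_action) fixed_if_orbit_meets_fixed:
  assumes x: "x \<in> E" and y: "y \<in> orbit G \<phi> x" "\<forall>g\<in>carrier G. \<phi> g y = y"
  shows "\<forall>g\<in>carrier G. \<phi> g x = x"
proof -
  have yE: "y \<in> E" using x y(1) element_image unfolding orbit_def by blast
  have "orbit G \<phi> y = {y}" using orbit_refl[OF yE] y(2) unfolding orbit_def by auto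
  moreover have "x \<in> orbit G \<phi> y" using orbit_sym[OF x yE y(1)] .
  ultimately have "x = y" by blast
  then show ?thesis using y(2) by simp
qed

lemma (in group_action) invariant_diff_orbit:
  assumes "F \<subseteq> E" and invariant: "\<forall>g\<in>carrier G. \<forall>y\<in>F. \<phi> g y \<in> F" and x: "x \<in> E"
  shows "\<forall>g\<in>carrier G. \<forall>y\<in>F - orbit G \<phi> x. \<phi> g y \<in> F - orbit G \<phi> x"
proof (intro ballI)
  fix g y assume g: "g \<in> carrier G" and y: "y \<in> F - orbit G \<phi> x"
  have yE: "y \<in> E" and gyE: "\<phi> g y \<in> E" using y g assms(1) invariant by blast+
  have "\<phi> g y \<in> orbit G \<phi> y" using g unfolding orbit_def by blast
  then have "\<phi> g y \<notin> orbit G \<phi> x" using y orbit_sym orbit_trans x yE gyE by blast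
  then show "\<phi> g y \<in> F - orbit G \<phi> x" using invariant g y by blast
qed

lemma (in group_action) card_invariant_subset_mod_fixed_points:
  assumes p: "prime p" and order: "Coset.order G = p ^ k"
    and "finite F" and "F \<subseteq> E" and "\<forall>g\<in>carrier G. \<forall>x\<in>F. \<phi> g x \<in> F"
  shows "card F mod p = card {x \<in> F. \<forall>g\<in>carrier G. \<phi> g x = x} mod p"
  using assms(3-)
proof (induction "card F" arbitrary: F rule: less_induct)
  case (less F)
  define Fix where "Fix F' = {x \<in> F'. \<forall>g\<in>carrier G. \<phi> g x = x}" for F'
  show ?case
  proof (cases "F = Fix F")
    case True
    then show ?thesis unfolding Fix_def by simp
  next
    case False
    then obtain x g where x: "x \<in> F" and g: "g \<in> carrier G" and moved: "\<phi> g x \<noteq> x"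
      unfolding Fix_def by blast
    have xE: "x \<in> E" using x less.prems(2) by blast
    have orbit_sub: "orbit G \<phi> x \<subseteq> F" using x less.prems(3) unfolding orbit_def by blast
    define F' where "F' = F - orbit G \<phi> x"
    have card_F: "card F = card F' + card (orbit G \<phi> x)"
      unfolding F'_def using orbit_sub less.prems(1)
      by (metis card_Diff_subset card_mono finite_subset le_add_diff_inverse2)
    have "card (orbit G \<phi> x) > 0"
      using orbit_refl[OF xE] orbit_sub less.prems(1) card_gt_0_iff finite_subset by blast
    then have "card F' < card F" using card_F by simp
    moreover have "F' \<subseteq> E" using less.prems(2) F'_def by blast
    moreover have "\<forall>h\<in>carrier G. \<forall>y\<in>F'. \<phi> h y \<in> F'"
      unfolding F'_def using invariant_diff_orbit[OF less.prems(2,3) xE] .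
    ultimately have "card F' mod p = card (Fix F') mod p"
      using less.hyps less.prems(1) unfolding F'_def Fix_def by auto
    moreover have "Fix F = Fix F'"
      using fixed_if_orbit_meets_fixed[OF xE] g moved unfolding Fix_def F'_def by blast
    moreover have "card F mod p = card F' mod p"
      using p_dvd_card_orbit[OF p order xE g moved] by (auto simp: card_F elim!: dvdE)
    ultimately show ?thesis unfolding Fix_def by simp
  qed
qed

lemma grp_center_subset: "grp_center G \<subseteq> carrier G"
  unfolding grp_center_def by auto

lemma (in group) one_in_grp_center: "\<one> \<in> grp_center G"
  unfolding grp_center_def by simp

lemma (in group) conjugation_fixed_iff_center:
  assumes "x \<in> carrier G"
  shows "(\<forall>g\<in>carrier G. g \<otimes> x \<otimes> inv g = x) \<longleftrightarrow> x \<in> grp_center G"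
proof -
  have "g \<otimes> x \<otimes> inv g = x \<longleftrightarrow> x \<otimes> g = g \<otimes> x" if "g \<in> carrier G" for g
    using that assms by (metis inv_solve_right' m_closed)
  then show ?thesis using assms unfolding grp_center_def by auto
qed

lemma p_dvd_card_normal_subgroup_inter_center:
  fixes G (structure)
  assumes "p_group G p" and normal: "K \<lhd> G" and "K \<noteq> {\<one>}"
  shows "p dvd card (K \<inter> grp_center G)"
proof -
  from assms(1) have grp: "group G" and fin: "finite (carrier G)" and p: "prime p"
    and "\<exists>k. Coset.order G = p ^ k" unfolding p_group_def Coset.order_def by auto
  then obtain k where order: "Coset.order G = p ^ k" by blast
  interpret group G by fact
  interpret K: subgroup K G using normal by (rule normal_imp_subgroup)
  interpret conj: group_action G "carrier G" "\<lambda>g. \<lambda>h\<in>carrier G. g \<otimes> h \<otimes> inv g"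
    by (rule action_by_conjugation)
  have finK: "finite K" using fin K.subset finite_subset by blast
  have "card K dvd p ^ k" using lagrange[OF K.subgroup_axioms] order by (metis dvd_triv_right)
  then obtain j where j: "card K = p ^ j" using p divides_primepow_nat by auto
  have "card K \<noteq> 1" using assms(3) K.one_closed by (metis card_1_singletonE singletonD)
  then have "p dvd card K" using j by (cases j) auto
  moreover have "card K mod p = card (K \<inter> grp_center G) mod p"
  proof -
    have "(\<lambda>h\<in>carrier G. g \<otimes> h \<otimes> inv g) x \<in> K" if "g \<in> carrier G" "x \<in> K" for g x
      using that K.subset normal_invE(2)[OF normal] by auto
    then have "card K mod p
        = card {x \<in> K. \<forall>g\<in>carrier G. (\<lambda>h\<in>carrier G. g \<otimes> h \<otimes> inv g) x = x} mod p"
      using conj.card_invariant_subset_mod_fixed_points[OF p order finK K.subset] by blast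
    also have "{x \<in> K. \<forall>g\<in>carrier G. (\<lambda>h\<in>carrier G. g \<otimes> h \<otimes> inv g) x = x} = K \<inter> grp_center G"
      using conjugation_fixed_iff_center K.subset by auto
    finally show ?thesis .
  qed
  ultimately show ?thesis by (simp add: mod_eq_0_iff_dvd)
qed

lemma center_subset_nontrivial_normal_subgroup:
  fixes G (structure)
  assumes pG: "p_group G p" and center: "card (grp_center G) = p"
    and "K \<lhd> G" and "K \<noteq> {\<one>}"
  shows "grp_center G \<subseteq> K"
proof -
  from pG have grp: "group G" and fin: "finite (carrier G)" unfolding p_group_def by auto
  have finZ: "finite (grp_center G)" by (rule finite_subset[OF grp_center_subset fin])
  have "\<one> \<in> K"
    using subgroup.one_closed[OF normal_imp_subgroup[OF assms(3)]] .
  then have "\<one> \<in> K \<inter> grp_center G"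
    using group.one_in_grp_center[OF grp] by blast
  then have "card (K \<inter> grp_center G) > 0"
    using finZ by (simp add: card_gt_0_iff) blast
  then have "card (K \<inter> grp_center G) \<ge> card (grp_center G)"
    using p_dvd_card_normal_subgroup_inter_center[OF pG assms(3,4)] center dvd_imp_le by simp
  then have "K \<inter> grp_center G = grp_center G"
    using finZ card_seteq[of "grp_center G" "K \<inter> grp_center G"] by blast
  then show ?thesis by blast
qed

lemma nontrivial_center_elementE:
  fixes G (structure)
  assumes "p_group G p" and "card (grp_center G) = p"
  obtains z where "z \<in> grp_center G" "z \<noteq> \<one>"
proof (rule ccontr)
  assume "\<not> thesis"
  then have "grp_center G \<subseteq> {\<one>}" using that by blast
  then have "card (grp_center G) \<le> card {\<one>}" by (intro card_mono) simp_all
  moreover have "1 < p" using assms(1) prime_gt_1_nat unfolding p_group_def by blast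
  ultimately show False using assms(2) by simp
qed

section \<open>Matrices\<close>

lemma smult_smult_mat: "(a :: 'a :: comm_ring_1) \<cdot>\<^sub>m (b \<cdot>\<^sub>m A) = (a * b) \<cdot>\<^sub>m A"
  by (rule eq_matI) auto

lemma one_smult_mat: "(1 :: 'a :: comm_ring_1) \<cdot>\<^sub>m A = A"
  by (rule eq_matI) auto

lemma smult_mat_mult_vec:
  assumes "A \<in> carrier_mat n m" "v \<in> carrier_vec m"
  shows "(k \<cdot>\<^sub>m A) *\<^sub>v v = (k :: 'a :: comm_ring_1) \<cdot>\<^sub>v (A *\<^sub>v v)"
  using assms by (intro eq_vecI) (auto simp: scalar_prod_def sum_distrib_left ac_simps)

lemma mult_mat_vec_unit_vec:
  assumes "A \<in> carrier_mat n n" "i < n" "j < n"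
  shows "(A *\<^sub>v unit_vec n j) $ i = (A $$ (i,j) :: 'a :: semiring_1)"
  using assms scalar_prod_right_unit[of j n "row A i"] by simp

lemma eq_smult_one_mat_if_eigen_everywhere:
  assumes A: "A \<in> carrier_mat n n" and eigen: "\<forall>w\<in>carrier_vec n. A *\<^sub>v w = c \<cdot>\<^sub>v w"
  shows "A = (c :: 'a :: semiring_1) \<cdot>\<^sub>m 1\<^sub>m n"
proof (rule eq_matI)
  fix i j assume "i < dim_row (c \<cdot>\<^sub>m 1\<^sub>m n)" "j < dim_col (c \<cdot>\<^sub>m 1\<^sub>m n)"
  then have ij: "i < n" "j < n" by auto
  have "A $$ (i,j) = (A *\<^sub>v unit_vec n j) $ i" using mult_mat_vec_unit_vec[OF A ij] ..
  also have "\<dots> = (c \<cdot>\<^sub>v unit_vec n j) $ i" using eigen by simp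
  finally show "A $$ (i,j) = (c \<cdot>\<^sub>m 1\<^sub>m n) $$ (i,j)" using ij by simp
qed (use A in auto)

lemma four_block_mat_diag_eqD:
  assumes eq: "four_block_mat A B C D = four_block_mat A' B' C' D'"
    and "A \<in> carrier_mat n1 m1" "A' \<in> carrier_mat n1 m1" "D \<in> carrier_mat n2 m2" "D' \<in> carrier_mat n2 m2"
  shows "A = A'" "D = D'"
proof -
  have entry: "four_block_mat A B C D $$ (i,j) = four_block_mat A' B' C' D' $$ (i,j)" for i j
    using eq by simp
  show "A = A'"
  proof (rule eq_matI)
    fix i j assume "i < dim_row A'" "j < dim_col A'"
    then show "A $$ (i,j) = A' $$ (i,j)" using entry[of i j] assms(2-) by simp
  qed (use assms(2,3) in auto)
  show "D = D'"
  proof (rule eq_matI)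
    fix i j assume "i < dim_row D'" "j < dim_col D'"
    then show "D $$ (i,j) = D' $$ (i,j)" using entry[of "n1 + i" "m1 + j"] assms(2-) by simp
  qed (use assms(4,5) in auto)
qed

lemma mult_four_block_mat_diag:
  assumes A: "A \<in> carrier_mat n n" "A' \<in> carrier_mat n n" and D: "D \<in> carrier_mat m m" "D' \<in> carrier_mat m m"
  shows "four_block_mat A (0\<^sub>m n m) (0\<^sub>m m n) D * four_block_mat A' (0\<^sub>m n m) (0\<^sub>m m n) D'
    = four_block_mat (A * A') (0\<^sub>m n m) (0\<^sub>m m n) (D * (D' :: 'a :: semiring_0 mat))"
proof -
  have "A * A' \<in> carrier_mat n n" "D * D' \<in> carrier_mat m m" using A D by auto
  then show ?thesis
    by (subst mult_four_block_mat[OF A(1) _ _ D(1) A(2) _ _ D(2)]) (use A D in auto)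
qed

lemma diagonal_mat_four_block_mat:
  assumes "diagonal_mat A" "diagonal_mat D" "A \<in> carrier_mat n n" "D \<in> carrier_mat m m"
  shows "diagonal_mat (four_block_mat A (0\<^sub>m n m) (0\<^sub>m m n) D)"
  using assms unfolding diagonal_mat_def by auto

lemma jordan_block_pow_eq_one_imp_dim_le_1:
  fixes a :: "'a :: {idom, ring_char_0}"
  assumes pow: "jordan_block m a ^\<^sub>m N = 1\<^sub>m m" and "N > 0"
  shows "m \<le> 1"
proof (rule ccontr)
  assume "\<not> m \<le> 1"
  then have entry: "(jordan_block m a ^\<^sub>m N) $$ (0, j) = 1\<^sub>m m $$ (0, j)" if "j \<le> 1" for j
    using pow that by simp
  have "a ^ N = 1"
    using entry[of 0] \<open>\<not> m \<le> 1\<close> unfolding jordan_block_pow by simp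
  then have "a \<noteq> 0" using \<open>N > 0\<close> by (cases N) auto
  moreover have "of_nat N * a ^ (N - 1) = 0"
    using entry[of 1] \<open>\<not> m \<le> 1\<close> unfolding jordan_block_pow by simp
  ultimately show False using \<open>N > 0\<close> by simp
qed

lemma jordan_matrix_pow_eq_one_imp_diagonal:
  fixes n_as :: "(nat \<times> 'a :: {idom, ring_char_0}) list"
  assumes "jordan_matrix n_as ^\<^sub>m N = 1\<^sub>m (sum_list (map fst n_as))" and "N > 0"
  shows "diagonal_mat (jordan_matrix n_as)"
  using assms(1)
proof (induction n_as)
  case Nil
  then show ?case by (simp add: diagonal_mat_def)
next
  case (Cons na rest)
  obtain m a where na: "na = (m, a)" by force
  define s where "s = sum_list (map fst rest)"
  have eq: "four_block_mat (jordan_block m a ^\<^sub>m N) (0\<^sub>m m s) (0\<^sub>m s m) (jordan_matrix rest ^\<^sub>m N)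
      = four_block_mat (1\<^sub>m m) (0\<^sub>m m s) (0\<^sub>m s m) (1\<^sub>m s)"
  proof -
    have "sum_list (map fst (na # rest)) = m + s" unfolding na s_def by simp
    then show ?thesis
      using Cons.prems unfolding na jordan_matrix_Cons s_def[symmetric]
      by (simp add: pow_four_block_mat[OF jordan_block_carrier jordan_matrix_carrier[of rest, folded s_def]])
  qed
  have block: "jordan_block m a ^\<^sub>m N = 1\<^sub>m m"
    by (rule four_block_mat_diag_eqD(1)[OF eq]) (auto simp: s_def)
  have rest: "jordan_matrix rest ^\<^sub>m N = 1\<^sub>m s"
    by (rule four_block_mat_diag_eqD(2)[OF eq]) (auto simp: s_def)
  have "m \<le> 1" using jordan_block_pow_eq_one_imp_dim_le_1[OF block \<open>N > 0\<close>] .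
  then have "diagonal_mat (jordan_block m a)" unfolding diagonal_mat_def by auto
  moreover have "diagonal_mat (jordan_matrix rest)" using Cons.IH rest unfolding s_def .
  ultimately show ?case
    unfolding na jordan_matrix_Cons s_def[symmetric]
    by (rule diagonal_mat_four_block_mat) (auto simp: s_def)
qed

lemma diagonal_mat_eq_smult_one:
  fixes D :: "'a :: semiring_1 mat"
  assumes "diagonal_mat D" "D \<in> carrier_mat n n" "\<forall>i<n. D $$ (i,i) = c"
  shows "D = c \<cdot>\<^sub>m 1\<^sub>m n"
  using assms unfolding diagonal_mat_def by (intro eq_matI) auto

lemma nonscalar_diagonal_mat_eigenvalueE:
  fixes D :: "'a :: semiring_1 mat"
  assumes diag: "diagonal_mat D" and D: "D \<in> carrier_mat n n" and nonscalar: "\<forall>c. D \<noteq> c \<cdot>\<^sub>m 1\<^sub>m n"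
  obtains c where "c \<noteq> 1" "{i. i < n \<and> D $$ (i,i) = c} \<noteq> {}" "card {i. i < n \<and> D $$ (i,i) = c} < n"
proof -
  obtain i0 where i0: "i0 < n" "D $$ (i0,i0) \<noteq> 1"
    using diagonal_mat_eq_smult_one[OF diag D] nonscalar by blast
  obtain j0 where j0: "j0 < n" "D $$ (j0,j0) \<noteq> D $$ (i0,i0)"
    using diagonal_mat_eq_smult_one[OF diag D] nonscalar by blast
  have "{i. i < n \<and> D $$ (i,i) = D $$ (i0,i0)} \<subset> {..<n}" using j0 by auto
  then have "card {i. i < n \<and> D $$ (i,i) = D $$ (i0,i0)} < n"
    using psubset_card_mono[of "{..<n}"] by simp
  moreover have "{i. i < n \<and> D $$ (i,i) = D $$ (i0,i0)} \<noteq> {}" using i0 by blast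
  ultimately show ?thesis using that i0(2) by blast
qed

lemma diagonal_mat_commute_imp_entry_eq_0:
  fixes D :: "'a :: idom mat"
  assumes D: "diagonal_mat D" "D \<in> carrier_mat n n" and B: "B \<in> carrier_mat n n"
    and comm: "B * D = D * B" and ij: "i < n" "j < n" and "D $$ (i,i) \<noteq> D $$ (j,j)"
  shows "B $$ (i,j) = 0"
proof -
  have off_diag: "D $$ (k,l) = 0" if "k < n" "l < n" "k \<noteq> l" for k l
    using D that unfolding diagonal_mat_def by auto
  have "(B * D) $$ (i,j) = (\<Sum>l<n. B $$ (i,l) * D $$ (l,j))"
    using D B ij by (simp add: scalar_prod_def atLeast0LessThan)
  also have "\<dots> = (\<Sum>l<n. if l = j then B $$ (i,j) * D $$ (j,j) else 0)"
    using ij off_diag by (intro sum.cong) auto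
  finally have BD: "(B * D) $$ (i,j) = B $$ (i,j) * D $$ (j,j)" using ij by simp
  have "(D * B) $$ (i,j) = (\<Sum>l<n. D $$ (i,l) * B $$ (l,j))"
    using D B ij by (simp add: scalar_prod_def atLeast0LessThan)
  also have "\<dots> = (\<Sum>l<n. if l = i then D $$ (i,i) * B $$ (i,j) else 0)"
    using ij off_diag by (intro sum.cong) auto
  finally have DB: "(D * B) $$ (i,j) = D $$ (i,i) * B $$ (i,j)" using ij by simp
  from comm BD DB have "B $$ (i,j) * D $$ (j,j) = B $$ (i,j) * D $$ (i,i)"
    by (metis mult.commute)
  then show ?thesis using assms(7) by simp
qed

lemma bij_betw_pick:
  assumes "finite S"
  shows "bij_betw (pick S) {..<card S} S"
proof (rule bij_betw_imageI)
  show "inj_on (pick S) {..<card S}"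
    by (rule inj_onI) (metis lessThan_iff linorder_neqE_nat pick_mono_le less_irrefl)
  show "pick S ` {..<card S} = S"
  proof
    show "pick S ` {..<card S} \<subseteq> S" using pick_in_set_le by auto
    show "S \<subseteq> pick S ` {..<card S}"
    proof
      fix i assume "i \<in> S"
      then have "{a \<in> S. a < i} \<subset> S" by auto
      then have "card {a \<in> S. a < i} < card S" by (rule psubset_card_mono[OF assms])
      then show "i \<in> pick S ` {..<card S}" using pick_card_in_set[OF \<open>i \<in> S\<close>] by force
    qed
  qed
qed

lemma card_Collect_less_mem: "S \<subseteq> {..<n} \<Longrightarrow> card {i. i < n \<and> i \<in> S} = card S"
  by (metis (no_types, lifting) Collect_cong Collect_mem_eq lessThan_iff subsetD)

lemma submatrix_one_mat:
  assumes "S \<subseteq> {..<n}"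
  shows "submatrix (1\<^sub>m n) S S = 1\<^sub>m (card S)"
proof -
  have "finite S" using assms finite_subset by blast
  then have "pick S i = pick S j \<longleftrightarrow> i = j" if "i < card S" "j < card S" for i j
    using bij_betw_pick that unfolding bij_betw_def inj_on_def by blast
  moreover have "pick S i < n" if "i < card S" for i
    using pick_in_set_le[OF that] assms by auto
  ultimately show ?thesis
    using assms by (intro eq_matI) (auto simp: submatrix_index dim_submatrix card_Collect_less_mem)
qed

lemma submatrix_mult_invariant:
  assumes A: "A \<in> carrier_mat n n" and B: "B \<in> carrier_mat n n" and S: "S \<subseteq> {..<n}"
    and inv: "\<forall>i<n. \<forall>j\<in>S. i \<notin> S \<longrightarrow> B $$ (i,j) = 0"
  shows "submatrix (A * B) S S = submatrix A S S * submatrix B S S"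
proof (rule eq_matI)
  have finS: "finite S" using S finite_subset by blast
  have pick_S: "pick S i \<in> S" if "i < card S" for i using pick_in_set_le[OF that] .
  have pick_n: "pick S i < n" if "i < card S" for i using pick_S[OF that] S by auto
  fix a b assume "a < dim_row (submatrix A S S * submatrix B S S)"
    "b < dim_col (submatrix A S S * submatrix B S S)"
  then have a: "a < card S" and b: "b < card S"
    using A B S by (auto simp: dim_submatrix card_Collect_less_mem)
  have "(submatrix A S S * submatrix B S S) $$ (a,b)
      = (\<Sum>c<card S. A $$ (pick S a, pick S c) * B $$ (pick S c, pick S b))"
    using A B S a b
    by (simp add: dim_submatrix card_Collect_less_mem submatrix_index scalar_prod_def atLeast0LessThan)
  also have "\<dots> = (\<Sum>l\<in>S. A $$ (pick S a, l) * B $$ (l, pick S b))"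
    by (rule sum.reindex_bij_betw[OF bij_betw_pick[OF finS]])
  also have "\<dots> = (\<Sum>l<n. A $$ (pick S a, l) * B $$ (l, pick S b))"
    using S inv pick_S[OF b] by (intro sum.mono_neutral_left) auto
  also have "\<dots> = submatrix (A * B) S S $$ (a,b)"
    using A B S a b pick_n[OF a] pick_n[OF b]
    by (auto simp: dim_submatrix card_Collect_less_mem submatrix_index scalar_prod_def atLeast0LessThan)
  finally show "submatrix (A * B) S S $$ (a,b) = (submatrix A S S * submatrix B S S) $$ (a,b)" ..
qed (use A B S in \<open>auto simp: dim_submatrix card_Collect_less_mem\<close>)

section \<open>Ordinary representations\<close>

lemma ord_rep_center_commute:
  assumes rep: "ord_rep G n \<sigma>" and z: "z \<in> grp_center G" and g: "g \<in> carrier G"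
  shows "\<sigma> z * \<sigma> g = \<sigma> g * \<sigma> z"
proof -
  have hom: "\<sigma> (x \<otimes>\<^bsub>G\<^esub> y) = \<sigma> x * \<sigma> y" if "x \<in> carrier G" "y \<in> carrier G" for x y
    using rep that unfolding ord_rep_def by blast
  have "z \<in> carrier G" "z \<otimes>\<^bsub>G\<^esub> g = g \<otimes>\<^bsub>G\<^esub> z" using z g unfolding grp_center_def by auto
  then show ?thesis using hom g by metis
qed

lemma (in group) ord_rep_mult_inv:
  assumes rep: "ord_rep G n \<rho>" and g: "g \<in> carrier G"
  shows "\<rho> g * \<rho> (inv g) = 1\<^sub>m n" "\<rho> (inv g) * \<rho> g = 1\<^sub>m n"
proof -
  have hom: "\<rho> (x \<otimes> y) = \<rho> x * \<rho> y" if "x \<in> carrier G" "y \<in> carrier G" for x y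
    using rep that unfolding ord_rep_def by blast
  have one: "\<rho> \<one> = 1\<^sub>m n" using rep unfolding ord_rep_def by blast
  show "\<rho> g * \<rho> (inv g) = 1\<^sub>m n" using hom[of g "inv g"] g one by simp
  show "\<rho> (inv g) * \<rho> g = 1\<^sub>m n" using hom[of "inv g" g] g one by simp
qed

lemma (in group) ord_rep_kernel_normal:
  assumes rep: "ord_rep G n \<rho>"
  shows "{g \<in> carrier G. \<rho> g = 1\<^sub>m n} \<lhd> G"
proof -
  have hom: "\<rho> (x \<otimes> y) = \<rho> x * \<rho> y" if "x \<in> carrier G" "y \<in> carrier G" for x y
    using rep that unfolding ord_rep_def by blast
  have one: "\<rho> \<one> = 1\<^sub>m n" using rep unfolding ord_rep_def by blast
  have inv: "\<rho> (inv g) = 1\<^sub>m n" if "g \<in> carrier G" "\<rho> g = 1\<^sub>m n" for g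
  proof -
    have "\<rho> (inv g) \<in> carrier_mat n n" using rep that(1) unfolding ord_rep_def by simp
    then show ?thesis using ord_rep_mult_inv(1)[OF rep that(1)] that(2) by simp
  qed
  have conj: "\<rho> (g \<otimes> h \<otimes> inv g) = 1\<^sub>m n" if "g \<in> carrier G" "h \<in> carrier G" "\<rho> h = 1\<^sub>m n" for g h
  proof -
    have "\<rho> g \<in> carrier_mat n n" using rep that(1) unfolding ord_rep_def by simp
    then show ?thesis
      using hom ord_rep_mult_inv(1)[OF rep that(1)] that by simp
  qed
  have "subgroup {g \<in> carrier G. \<rho> g = 1\<^sub>m n} G"
  proof (rule subgroupI)
    show "{g \<in> carrier G. \<rho> g = 1\<^sub>m n} \<noteq> {}" using one by blast
  qed (use hom inv in auto)
  then show ?thesis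
    unfolding normal_inv_iff using conj by blast
qed

lemma (in group) ord_rep_pow:
  assumes rep: "ord_rep G n \<sigma>" and g: "g \<in> carrier G"
  shows "\<sigma> (g [^] (k :: nat)) = \<sigma> g ^\<^sub>m k"
proof (induction k)
  case 0
  then show ?case using rep g unfolding ord_rep_def by auto
next
  case (Suc k)
  then show ?case using rep g unfolding ord_rep_def by simp
qed

lemma (in group) ord_rep_imp_proj_rep:
  assumes rep: "ord_rep G n \<rho>"
  shows "proj_rep G n \<rho>"
proof -
  have "invertible_mat (\<rho> g)" if g: "g \<in> carrier G" for g
  proof -
    have "\<rho> g \<in> carrier_mat n n" "\<rho> (inv g) \<in> carrier_mat n n"
      using rep g unfolding ord_rep_def by auto
    then show ?thesis
      using ord_rep_mult_inv[OF rep g]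
      unfolding invertible_mat_def inverts_mat_def by (metis carrier_matD square_mat.simps)
  qed
  then have "alpha_rep G (\<lambda>_ _. 1) n \<rho>"
    using rep unfolding alpha_rep_def ord_rep_def cocycle_def by (simp add: one_smult_mat)
  then show ?thesis using rep unfolding proj_rep_def ord_rep_def by blast
qed

lemma ord_rep_trivial: "ord_rep G 1 (\<lambda>_. 1\<^sub>m 1)"
  unfolding ord_rep_def by simp

lemma ord_rep_direct_sum:
  assumes \<rho>: "ord_rep G n \<rho>" and \<rho>': "ord_rep G m \<rho>'"
  shows "ord_rep G (n + m) (\<lambda>g. four_block_mat (\<rho> g) (0\<^sub>m n m) (0\<^sub>m m n) (\<rho>' g))"
  using \<rho> \<rho>' unfolding ord_rep_def by (simp add: mult_four_block_mat_diag)

lemma faithful_proj_direct_sum_one: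
  assumes rep: "ord_rep G n \<rho>" and faithful: "faithful_ord G n \<rho>"
  shows "faithful_proj G (n + 1) (\<lambda>g. four_block_mat (\<rho> g) (0\<^sub>m n 1) (0\<^sub>m 1 n) (1\<^sub>m 1))"
  unfolding faithful_proj_def
proof (intro ballI impI)
  fix g assume g: "g \<in> carrier G" and "\<exists>c. four_block_mat (\<rho> g) (0\<^sub>m n 1) (0\<^sub>m 1 n) (1\<^sub>m 1) = c \<cdot>\<^sub>m 1\<^sub>m (n + 1)"
  then obtain c where c: "four_block_mat (\<rho> g) (0\<^sub>m n 1) (0\<^sub>m 1 n) (1\<^sub>m 1) = c \<cdot>\<^sub>m 1\<^sub>m (n + 1)" by blast
  have \<rho>g: "\<rho> g \<in> carrier_mat n n" using rep g unfolding ord_rep_def by auto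
  have "c = 1" using arg_cong[OF c, of "\<lambda>M. M $$ (n, n)"] \<rho>g by simp
  have "\<rho> g = 1\<^sub>m n"
  proof (rule eq_matI)
    fix i j assume "i < dim_row (1\<^sub>m n :: complex mat)" "j < dim_col (1\<^sub>m n :: complex mat)"
    then show "\<rho> g $$ (i,j) = 1\<^sub>m n $$ (i,j)"
      using arg_cong[OF c, of "\<lambda>M. M $$ (i, j)"] \<rho>g \<open>c = 1\<close> by simp
  qed (use \<rho>g in auto)
  then show "g = \<one>\<^bsub>G\<^esub>" using faithful g unfolding faithful_ord_def by blast
qed

lemma (in group) faithful_proj_rep_of_faithful_ord_rep:
  assumes "ord_rep G n \<rho>" "faithful_ord G n \<rho>"
  shows "\<exists>\<rho>'. proj_rep G (n + 1) \<rho>' \<and> faithful_proj G (n + 1) \<rho>'"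
  using ord_rep_imp_proj_rep[OF ord_rep_direct_sum[OF assms(1) ord_rep_trivial]]
    faithful_proj_direct_sum_one[OF assms] by blast

(* The basis of the group algebra is indexed by an enumeration e of the group. *)
definition regular_rep :: "('a, 'b) monoid_scheme \<Rightarrow> (nat \<Rightarrow> 'a) \<Rightarrow> 'a \<Rightarrow> complex mat" where
  "regular_rep G e g = mat (card (carrier G)) (card (carrier G))
     (\<lambda>(i,j). if e i = g \<otimes>\<^bsub>G\<^esub> e j then 1 else 0)"

lemma (in group) regular_rep_mult:
  assumes e: "bij_betw e {0..<card (carrier G)} (carrier G)"
    and g: "g \<in> carrier G" and h: "h \<in> carrier G"
  shows "regular_rep G e (g \<otimes> h) = regular_rep G e g * regular_rep G e h"
proof (rule eq_matI)
  define n where "n = card (carrier G)"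
  have eG: "e l \<in> carrier G" if "l < n" for l using e that bij_betwE unfolding n_def by fastforce
  fix i j assume "i < dim_row (regular_rep G e g * regular_rep G e h)"
    "j < dim_col (regular_rep G e g * regular_rep G e h)"
  then have i: "i < n" and j: "j < n" by (auto simp: regular_rep_def n_def)
  obtain l0 where l0: "l0 < n" "e l0 = h \<otimes> e j"
    using e h eG[OF j] unfolding bij_betw_def n_def by (metis atLeastLessThan_iff imageE m_closed)
  have "(regular_rep G e g * regular_rep G e h) $$ (i,j)
      = (\<Sum>l = 0..<n. (if e i = g \<otimes> e l then 1 else 0) * (if e l = h \<otimes> e j then 1 else 0))"
    using i j by (simp add: regular_rep_def scalar_prod_def n_def)
  also have "\<dots> = (\<Sum>l = 0..<n. if l = l0 then (if e i = g \<otimes> e l0 then 1 else 0) else 0)"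
  proof (rule sum.cong[OF refl])
    fix l assume "l \<in> {0..<n}"
    then have "e l = h \<otimes> e j \<longleftrightarrow> l = l0"
      using l0 e unfolding bij_betw_def inj_on_def n_def by auto
    then show "(if e i = g \<otimes> e l then 1 else 0) * (if e l = h \<otimes> e j then 1 else 0)
        = (if l = l0 then (if e i = g \<otimes> e l0 then 1 else 0) else (0::complex))" by auto
  qed
  also have "\<dots> = regular_rep G e (g \<otimes> h) $$ (i,j)"
    using i j l0 g h eG[OF j] by (simp add: regular_rep_def m_assoc n_def)
  finally show "regular_rep G e (g \<otimes> h) $$ (i,j) = (regular_rep G e g * regular_rep G e h) $$ (i,j)" ..
qed (auto simp: regular_rep_def)

lemma (in group) ex_faithful_ord_rep:
  assumes fin: "finite (carrier G)"
  shows "\<exists>n \<rho>. ord_rep G n \<rho> \<and> faithful_ord G n \<rho>"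
proof -
  define n where "n = card (carrier G)"
  obtain e where e: "bij_betw e {0..<n} (carrier G)"
    using ex_bij_betw_nat_finite[OF fin] unfolding n_def by blast
  have n: "n \<ge> 1" unfolding n_def using fin one_closed
    by (metis One_nat_def Suc_leI card_gt_0_iff empty_iff)
  have eG: "e l \<in> carrier G" if "l < n" for l using e that bij_betwE by fastforce
  have "regular_rep G e \<one> = 1\<^sub>m n"
    using e eG unfolding bij_betw_def inj_on_def
    by (intro eq_matI) (auto simp: regular_rep_def n_def)
  then have "ord_rep G n (regular_rep G e)"
    using n regular_rep_mult e unfolding ord_rep_def n_def by (simp add: regular_rep_def)
  moreover have "faithful_ord G n (regular_rep G e)" unfolding faithful_ord_def
  proof (intro ballI impI)
    fix g assume g: "g \<in> carrier G" and "regular_rep G e g = 1\<^sub>m n"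
    then have "regular_rep G e g $$ (0,0) = 1" using n by simp
    then have "e 0 = g \<otimes> e 0" using n by (simp add: regular_rep_def n_def split: if_splits)
    then show "g = \<one>" using g eG[of 0] n by (metis r_cancel_one One_nat_def less_eq_Suc_le)
  qed
  ultimately show ?thesis by blast
qed

lemma ord_rep_similar:
  assumes rep: "ord_rep G n \<sigma>" and PQ: "P \<in> carrier_mat n n" "Q \<in> carrier_mat n n"
    "P * Q = 1\<^sub>m n" "Q * P = 1\<^sub>m n"
  shows "ord_rep G n (\<lambda>g. Q * \<sigma> g * P)"
proof -
  have \<sigma>: "\<sigma> g \<in> carrier_mat n n" if "g \<in> carrier G" for g using rep that unfolding ord_rep_def by blast
  have PQX: "P * (Q * X) = X" if "X \<in> carrier_mat n n" for X
    using PQ that by (simp flip: assoc_mult_mat[of P n n Q n X n])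
  have "Q * \<sigma> g * P * (Q * \<sigma> h * P) = Q * (\<sigma> g * \<sigma> h) * P"
    if "g \<in> carrier G" "h \<in> carrier G" for g h
    using PQ \<sigma>[OF that(1)] \<sigma>[OF that(2)] by (simp add: assoc_mult_mat[of _ n n _ n _ n] PQX)
  then show ?thesis using rep PQ unfolding ord_rep_def by auto
qed

lemma faithful_proj_similar:
  assumes \<sigma>: "\<forall>g\<in>carrier G. \<sigma> g \<in> carrier_mat n n" and faithful: "faithful_proj G n \<sigma>"
    and PQ: "P \<in> carrier_mat n n" "Q \<in> carrier_mat n n" "P * Q = 1\<^sub>m n"
  shows "faithful_proj G n (\<lambda>g. Q * \<sigma> g * P)"
  unfolding faithful_proj_def
proof (intro ballI impI)
  fix g assume g: "g \<in> carrier G" and "\<exists>c. Q * \<sigma> g * P = c \<cdot>\<^sub>m 1\<^sub>m n"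
  then obtain c where c: "Q * \<sigma> g * P = c \<cdot>\<^sub>m 1\<^sub>m n" by blast
  have \<sigma>g: "\<sigma> g \<in> carrier_mat n n" using \<sigma> g by blast
  have PQX: "P * (Q * X) = X" if "X \<in> carrier_mat n n" for X
    using PQ that by (simp flip: assoc_mult_mat[of P n n Q n X n])
  have "\<sigma> g = P * (Q * \<sigma> g * P) * Q" using PQ \<sigma>g by (simp add: PQX)
  also have "\<dots> = c \<cdot>\<^sub>m 1\<^sub>m n"
    using PQ unfolding c by (simp add: mult_smult_distrib[of _ n n _ n] mult_smult_assoc_mat[of _ n n _ n])
  finally show "g = \<one>\<^bsub>G\<^esub>" using faithful g unfolding faithful_proj_def by blast
qed

lemma ord_rep_submatrix:
  assumes rep: "ord_rep G n \<tau>" and S: "S \<subseteq> {..<n}" "S \<noteq> {}"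
    and invariant: "\<forall>g\<in>carrier G. \<forall>i<n. \<forall>j\<in>S. i \<notin> S \<longrightarrow> \<tau> g $$ (i,j) = 0"
  shows "ord_rep G (card S) (\<lambda>g. submatrix (\<tau> g) S S)"
  unfolding ord_rep_def
proof (intro conjI ballI)
  have \<tau>: "\<tau> g \<in> carrier_mat n n" if "g \<in> carrier G" for g using rep that unfolding ord_rep_def by blast
  have "finite S" using S(1) by (rule finite_subset) simp
  then show "card S \<ge> 1" using S(2) by (simp add: Suc_le_eq card_gt_0_iff)
  show "submatrix (\<tau> g) S S \<in> carrier_mat (card S) (card S)" if "g \<in> carrier G" for g
  proof (rule carrier_matI)
    have "dim_row (\<tau> g) = n" "dim_col (\<tau> g) = n" using \<tau>[OF that] by auto
    then show "dim_row (submatrix (\<tau> g) S S) = card S" "dim_col (submatrix (\<tau> g) S S) = card S"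
      unfolding dim_submatrix by (simp_all only: card_Collect_less_mem[OF S(1)])
  qed
  have "\<tau> \<one>\<^bsub>G\<^esub> = 1\<^sub>m n" using rep unfolding ord_rep_def by blast
  then show "submatrix (\<tau> \<one>\<^bsub>G\<^esub>) S S = 1\<^sub>m (card S)" using submatrix_one_mat[OF S(1)] by simp
  fix g h assume g: "g \<in> carrier G" and h: "h \<in> carrier G"
  have "\<tau> (g \<otimes>\<^bsub>G\<^esub> h) = \<tau> g * \<tau> h" using rep g h unfolding ord_rep_def by blast
  then show "submatrix (\<tau> (g \<otimes>\<^bsub>G\<^esub> h)) S S = submatrix (\<tau> g) S S * submatrix (\<tau> h) S S"
    using submatrix_mult_invariant[OF \<tau>[OF g] \<tau>[OF h] S(1) bspec[OF invariant h]] by simp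
qed

section \<open>Projective representations of groups with trivial Schur multiplier\<close>

lemma (in group) proj_rep_linearize:
  assumes schur: "trivial_schur_multiplier G" and proj: "proj_rep G n \<rho>"
  obtains \<beta> \<sigma> where "ord_rep G n \<sigma>" "\<forall>g\<in>carrier G. \<beta> g \<noteq> 0 \<and> \<rho> g = \<beta> g \<cdot>\<^sub>m \<sigma> g"
proof -
  from proj obtain \<alpha> where n: "n \<ge> 1" and "alpha_rep G \<alpha> n \<rho>" unfolding proj_rep_def by auto
  then have coc: "cocycle G \<alpha>" and carrier: "\<forall>g\<in>carrier G. \<rho> g \<in> carrier_mat n n"
    and one: "\<rho> \<one> = 1\<^sub>m n"
    and mult: "\<forall>g\<in>carrier G. \<forall>h\<in>carrier G. \<rho> g * \<rho> h = \<alpha> g h \<cdot>\<^sub>m \<rho> (g \<otimes> h)"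
    unfolding alpha_rep_def by auto
  from schur coc obtain \<beta> where \<beta>: "\<forall>g\<in>carrier G. \<beta> g \<noteq> 0"
    and \<alpha>: "\<forall>g\<in>carrier G. \<forall>h\<in>carrier G. \<alpha> g h = \<beta> g * \<beta> h / \<beta> (g \<otimes> h)"
    unfolding trivial_schur_multiplier_def coboundary_def by blast
  have "\<rho> \<one> * \<rho> \<one> = \<alpha> \<one> \<one> \<cdot>\<^sub>m \<rho> (\<one> \<otimes> \<one>)" using mult one_closed by blast
  then have "1\<^sub>m n = \<alpha> \<one> \<one> \<cdot>\<^sub>m (1\<^sub>m n :: complex mat)" using one by simp
  from arg_cong[OF this, of "\<lambda>M. M $$ (0, 0)"] n have "\<alpha> \<one> \<one> = 1" by simp
  then have \<beta>_one: "\<beta> \<one> = 1" using \<alpha> \<beta> by (simp add: field_simps)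
  define \<sigma> where "\<sigma> g = (1 / \<beta> g) \<cdot>\<^sub>m \<rho> g" for g
  have "\<sigma> g * \<sigma> h = \<sigma> (g \<otimes> h)" if g: "g \<in> carrier G" and h: "h \<in> carrier G" for g h
  proof -
    have "\<sigma> g * \<sigma> h = (1 / \<beta> g * (1 / \<beta> h)) \<cdot>\<^sub>m (\<rho> g * \<rho> h)"
      unfolding \<sigma>_def using carrier g h
      by (simp add: mult_smult_assoc_mat[of _ n n _ n] mult_smult_distrib[of _ n n _ n] smult_smult_mat mult_ac)
    also have "\<dots> = (1 / \<beta> g * (1 / \<beta> h) * \<alpha> g h) \<cdot>\<^sub>m \<rho> (g \<otimes> h)"
      using mult g h by (simp add: smult_smult_mat)
    also have "1 / \<beta> g * (1 / \<beta> h) * \<alpha> g h = 1 / \<beta> (g \<otimes> h)"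
      using \<alpha> \<beta> g h by (simp add: field_simps)
    finally show ?thesis unfolding \<sigma>_def .
  qed
  then have "ord_rep G n \<sigma>"
    using n carrier one \<beta>_one unfolding ord_rep_def \<sigma>_def by (simp add: one_smult_mat)
  moreover have "\<forall>g\<in>carrier G. \<beta> g \<noteq> 0 \<and> \<rho> g = \<beta> g \<cdot>\<^sub>m \<sigma> g"
    using \<beta> unfolding \<sigma>_def by (simp add: smult_smult_mat one_smult_mat)
  ultimately show ?thesis using that by blast
qed

lemma faithful_proj_rescale:
  assumes rescale: "\<forall>g\<in>carrier G. \<rho> g = \<beta> g \<cdot>\<^sub>m \<sigma> g" and faithful: "faithful_proj G n \<rho>"
  shows "faithful_proj G n \<sigma>"
  unfolding faithful_proj_def
proof (intro ballI impI)
  fix g assume g: "g \<in> carrier G" and "\<exists>c. \<sigma> g = c \<cdot>\<^sub>m 1\<^sub>m n"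
  then obtain c where "\<sigma> g = c \<cdot>\<^sub>m 1\<^sub>m n" by blast
  then have "\<rho> g = (\<beta> g * c) \<cdot>\<^sub>m 1\<^sub>m n" using rescale g by (simp add: smult_smult_mat)
  then show "g = \<one>\<^bsub>G\<^esub>" using faithful g unfolding faithful_proj_def by blast
qed

lemma irreducible_rep_rescale:
  assumes rescale: "\<forall>g\<in>carrier G. \<rho> g = \<beta> g \<cdot>\<^sub>m \<sigma> g"
    and \<sigma>: "\<forall>g\<in>carrier G. \<sigma> g \<in> carrier_mat n n" and irr: "irreducible_rep G n \<rho>"
  shows "irreducible_rep G n \<sigma>"
proof -
  have "invariant_subspace G n \<rho> W" if inv: "invariant_subspace G n \<sigma> W" for W
  proof -
    have "\<rho> g *\<^sub>v v \<in> W" if g: "g \<in> carrier G" and v: "v \<in> W" for g v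
    proof -
      have "v \<in> carrier_vec n" "\<sigma> g *\<^sub>v v \<in> W"
        using inv g v unfolding invariant_subspace_def by auto
      moreover have "\<rho> g *\<^sub>v v = \<beta> g \<cdot>\<^sub>v (\<sigma> g *\<^sub>v v)"
        using rescale \<sigma> g smult_mat_mult_vec[of "\<sigma> g" n n v "\<beta> g"] \<open>v \<in> carrier_vec n\<close> by simp
      ultimately show ?thesis using inv unfolding invariant_subspace_def by simp
    qed
    then show ?thesis using inv unfolding invariant_subspace_def by blast
  qed
  then show ?thesis using irr unfolding irreducible_rep_def by blast
qed

lemma eigenspace_invariant_subspace:
  assumes \<sigma>: "\<forall>g\<in>carrier G. \<sigma> g \<in> carrier_mat n n" and A: "A \<in> carrier_mat n n"
    and comm: "\<forall>g\<in>carrier G. A * \<sigma> g = \<sigma> g * A"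
  shows "invariant_subspace G n \<sigma> {w \<in> carrier_vec n. A *\<^sub>v w = c \<cdot>\<^sub>v w}"
  unfolding invariant_subspace_def
proof (intro conjI ballI allI)
  fix v w assume "v \<in> {w \<in> carrier_vec n. A *\<^sub>v w = c \<cdot>\<^sub>v w}" "w \<in> {w \<in> carrier_vec n. A *\<^sub>v w = c \<cdot>\<^sub>v w}"
  then show "v + w \<in> {w \<in> carrier_vec n. A *\<^sub>v w = c \<cdot>\<^sub>v w}"
    using A by (auto simp: mult_add_distrib_mat_vec smult_add_distrib_vec)
next
  fix d v assume "v \<in> {w \<in> carrier_vec n. A *\<^sub>v w = c \<cdot>\<^sub>v w}"
  then show "d \<cdot>\<^sub>v v \<in> {w \<in> carrier_vec n. A *\<^sub>v w = c \<cdot>\<^sub>v w}"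
    using A by (simp add: mult_mat_vec smult_smult_assoc mult.commute)
next
  fix g v assume g: "g \<in> carrier G" and v: "v \<in> {w \<in> carrier_vec n. A *\<^sub>v w = c \<cdot>\<^sub>v w}"
  have \<sigma>g: "\<sigma> g \<in> carrier_mat n n" using \<sigma> g by blast
  have "A *\<^sub>v (\<sigma> g *\<^sub>v v) = (A * \<sigma> g) *\<^sub>v v" using A \<sigma>g v by simp
  also have "\<dots> = \<sigma> g *\<^sub>v (A *\<^sub>v v)" using comm g A \<sigma>g v by simp
  also have "\<dots> = c \<cdot>\<^sub>v (\<sigma> g *\<^sub>v v)" using \<sigma>g v by (simp add: mult_mat_vec)
  finally show "\<sigma> g *\<^sub>v v \<in> {w \<in> carrier_vec n. A *\<^sub>v w = c \<cdot>\<^sub>v w}" using \<sigma>g v by simp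
qed (use A in auto)

lemma schur_lemma:
  fixes \<sigma> :: "'a \<Rightarrow> complex mat"
  assumes irr: "irreducible_rep G n \<sigma>" and \<sigma>: "\<forall>g\<in>carrier G. \<sigma> g \<in> carrier_mat n n"
    and A: "A \<in> carrier_mat n n" and comm: "\<forall>g\<in>carrier G. A * \<sigma> g = \<sigma> g * A"
  shows "\<exists>c. A = c \<cdot>\<^sub>m 1\<^sub>m n"
proof -
  have "n > 0" using irr unfolding irreducible_rep_def by simp
  then obtain c where "c \<in> spectrum A" using spectrum_non_empty[OF A] by blast
  then obtain v where v: "eigenvector A v c" unfolding spectrum_def eigenvalue_def by auto
  define W where "W = {w \<in> carrier_vec n. A *\<^sub>v w = c \<cdot>\<^sub>v w}"
  have "v \<in> W" "v \<noteq> 0\<^sub>v n" using v A unfolding W_def eigenvector_def by auto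
  moreover have "invariant_subspace G n \<sigma> W"
    unfolding W_def using eigenspace_invariant_subspace[OF \<sigma> A comm] .
  ultimately have "W = carrier_vec n" using irr unfolding irreducible_rep_def by blast
  then have "A = c \<cdot>\<^sub>m 1\<^sub>m n"
    using eq_smult_one_mat_if_eigen_everywhere[OF A] unfolding W_def by blast
  then show ?thesis ..
qed

lemma (in group) no_faithful_irreducible_proj_rep:
  assumes schur: "trivial_schur_multiplier G" and z: "z \<in> grp_center G" "z \<noteq> \<one>"
  shows "\<not> (\<exists>n \<rho>. proj_rep G n \<rho> \<and> faithful_proj G n \<rho> \<and> irreducible_rep G n \<rho>)"
proof
  assume "\<exists>n \<rho>. proj_rep G n \<rho> \<and> faithful_proj G n \<rho> \<and> irreducible_rep G n \<rho>"
  then obtain n \<rho> where proj: "proj_rep G n \<rho>" and faithful: "faithful_proj G n \<rho>"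
    and irr: "irreducible_rep G n \<rho>" by blast
  obtain \<beta> \<sigma> where rep: "ord_rep G n \<sigma>" and "\<forall>g\<in>carrier G. \<beta> g \<noteq> 0 \<and> \<rho> g = \<beta> g \<cdot>\<^sub>m \<sigma> g"
    using proj_rep_linearize[OF schur proj] .
  then have rescale: "\<forall>g\<in>carrier G. \<rho> g = \<beta> g \<cdot>\<^sub>m \<sigma> g" by blast
  have \<sigma>: "\<forall>g\<in>carrier G. \<sigma> g \<in> carrier_mat n n" using rep unfolding ord_rep_def by blast
  have zG: "z \<in> carrier G" using z(1) grp_center_subset[of G] by blast
  have "\<exists>c. \<sigma> z = c \<cdot>\<^sub>m 1\<^sub>m n"
  proof (rule schur_lemma[OF irreducible_rep_rescale[OF rescale \<sigma> irr] \<sigma>])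
    show "\<sigma> z \<in> carrier_mat n n" using \<sigma> zG by blast
    show "\<forall>g\<in>carrier G. \<sigma> z * \<sigma> g = \<sigma> g * \<sigma> z" using ord_rep_center_commute[OF rep z(1)] by blast
  qed
  then show False
    using faithful_proj_rescale[OF rescale faithful] zG z(2) unfolding faithful_proj_def by blast
qed

section \<open>Faithful projective representations\<close>

lemma faithful_ord_if_center_not_in_kernel:
  fixes G (structure)
  assumes pG: "p_group G p" and center: "card (grp_center G) = p"
    and rep: "ord_rep G n \<rho>" and z: "z \<in> grp_center G" "\<rho> z \<noteq> 1\<^sub>m n"
  shows "faithful_ord G n \<rho>"
proof -
  have "group G" using pG unfolding p_group_def by simp
  then have normal: "{g \<in> carrier G. \<rho> g = 1\<^sub>m n} \<lhd> G" by (rule group.ord_rep_kernel_normal[OF _ rep])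
  have "\<not> grp_center G \<subseteq> {g \<in> carrier G. \<rho> g = 1\<^sub>m n}" using z by blast
  then have "{g \<in> carrier G. \<rho> g = 1\<^sub>m n} = {\<one>}"
    using center_subset_nontrivial_normal_subgroup[OF pG center normal] by blast
  then show ?thesis unfolding faithful_ord_def by blast
qed

lemma (in group) ord_rep_diagonalize:
  fixes \<sigma> :: "'a \<Rightarrow> complex mat"
  assumes fin: "finite (carrier G)" and rep: "ord_rep G n \<sigma>" and faithful: "faithful_proj G n \<sigma>"
    and z: "z \<in> carrier G"
  obtains \<tau> where "ord_rep G n \<tau>" "faithful_proj G n \<tau>" "diagonal_mat (\<tau> z)"
proof -
  have \<sigma>: "\<forall>g\<in>carrier G. \<sigma> g \<in> carrier_mat n n" using rep unfolding ord_rep_def by blast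
  have A: "\<sigma> z \<in> carrier_mat n n" using \<sigma> z by blast
  obtain as where "char_poly (\<sigma> z) = (\<Prod>a\<leftarrow>as. [:- a, 1:])" using char_poly_factorized[OF A] by blast
  then obtain n_as where "jordan_nf (\<sigma> z) n_as" using jordan_nf_exists[OF A] by blast
  then obtain P Q where "similar_mat_wit (\<sigma> z) (jordan_matrix n_as) P Q"
    unfolding jordan_nf_def similar_mat_def by blast
  note PQ = similar_mat_witD2[OF A this]
  define \<tau> where "\<tau> g = Q * \<sigma> g * P" for g
  have rep_\<tau>: "ord_rep G n \<tau>" unfolding \<tau>_def using ord_rep_similar[OF rep PQ(6,7,1,2)] .
  have QPX: "Q * (P * X) = X" if "X \<in> carrier_mat n n" for X
    using PQ that by (simp flip: assoc_mult_mat[of Q n n P n X n])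
  have "\<tau> z = jordan_matrix n_as"
    using PQ unfolding \<tau>_def by (simp add: PQ(3) QPX right_mult_one_mat[OF PQ(5)])
  \<comment> \<open>\<open>\<sigma> z\<close> has finite order, so its Jordan normal form is diagonal\<close>
  moreover have "jordan_matrix n_as ^\<^sub>m Coset.order G = 1\<^sub>m (sum_list (map fst n_as))"
  proof -
    have "\<tau> z ^\<^sub>m Coset.order G = 1\<^sub>m n"
      using ord_rep_pow[OF rep_\<tau> z] pow_order_eq_1[OF z] rep_\<tau> unfolding ord_rep_def by metis
    moreover have "sum_list (map fst n_as) = n" using PQ(5) by (metis carrier_matD(1) jordan_matrix_dim(1))
    ultimately show ?thesis using \<open>\<tau> z = jordan_matrix n_as\<close> by simp
  qed
  moreover have "Coset.order G > 0" using fin by (simp add: order_gt_0_iff_finite)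
  ultimately have "diagonal_mat (\<tau> z)" using jordan_matrix_pow_eq_one_imp_diagonal by metis
  moreover have "faithful_proj G n \<tau>" unfolding \<tau>_def using faithful_proj_similar[OF \<sigma> faithful PQ(6,7,1)] .
  ultimately show ?thesis using that rep_\<tau> by blast
qed

lemma ord_rep_restrict_eigencoordinates:
  assumes rep: "ord_rep G n \<tau>" and z: "z \<in> grp_center G" and diag: "diagonal_mat (\<tau> z)"
    and S: "S = {i. i < n \<and> \<tau> z $$ (i,i) = c}" "S \<noteq> {}"
  shows "ord_rep G (card S) (\<lambda>g. submatrix (\<tau> g) S S)"
    and "submatrix (\<tau> z) S S = c \<cdot>\<^sub>m 1\<^sub>m (card S)"
proof -
  have \<tau>: "\<tau> g \<in> carrier_mat n n" if "g \<in> carrier G" for g using rep that unfolding ord_rep_def by blast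
  have zG: "z \<in> carrier G" using z grp_center_subset[of G] by blast
  have SS: "S \<subseteq> {..<n}" using S(1) by auto
  have "\<tau> g $$ (i,j) = 0" if "g \<in> carrier G" "i < n" "j \<in> S" "i \<notin> S" for g i j
  proof (rule diagonal_mat_commute_imp_entry_eq_0[OF diag \<tau>[OF zG] \<tau>[OF that(1)]])
    show "\<tau> g * \<tau> z = \<tau> z * \<tau> g" using ord_rep_center_commute[OF rep z that(1)] by simp
    show "\<tau> z $$ (i, i) \<noteq> \<tau> z $$ (j, j)" using that S(1) by auto
  qed (use that S(1) in auto)
  then show rep_S: "ord_rep G (card S) (\<lambda>g. submatrix (\<tau> g) S S)"
    using ord_rep_submatrix[OF rep SS S(2)] by blast
  have carrier: "submatrix (\<tau> z) S S \<in> carrier_mat (card S) (card S)"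
    using rep_S zG unfolding ord_rep_def by blast
  have card: "card {i. i < dim_row (\<tau> z) \<and> i \<in> S} = card S" "card {i. i < dim_col (\<tau> z) \<and> i \<in> S} = card S"
    using \<tau>[OF zG] card_Collect_less_mem[OF SS] by auto
  show "submatrix (\<tau> z) S S = c \<cdot>\<^sub>m 1\<^sub>m (card S)"
  proof (rule eq_matI)
    fix i j assume "i < dim_row (c \<cdot>\<^sub>m 1\<^sub>m (card S))" "j < dim_col (c \<cdot>\<^sub>m 1\<^sub>m (card S))"
    then have ij: "i < card S" "j < card S" by auto
    have "pick S i = pick S j \<longleftrightarrow> i = j"
      using bij_betw_pick[OF finite_subset[OF SS]] ij unfolding bij_betw_def inj_on_def by blast
    moreover have "pick S i \<in> S" "pick S j \<in> S" using pick_in_set_le ij by auto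
    moreover have "submatrix (\<tau> z) S S $$ (i,j) = \<tau> z $$ (pick S i, pick S j)"
      using submatrix_index[of i "\<tau> z" S j S] ij card by simp
    ultimately show "submatrix (\<tau> z) S S $$ (i,j) = (c \<cdot>\<^sub>m 1\<^sub>m (card S)) $$ (i,j)"
      using diag \<tau>[OF zG] ij S(1) unfolding diagonal_mat_def by auto
  qed (use carrier in auto)
qed

lemma smaller_faithful_ord_rep:
  fixes G (structure) and \<sigma> :: "'a \<Rightarrow> complex mat"
  assumes pG: "p_group G p" and center: "card (grp_center G) = p"
    and rep: "ord_rep G n \<sigma>" and faithful: "faithful_proj G n \<sigma>"
  shows "\<exists>k<n. \<exists>\<rho>. ord_rep G k \<rho> \<and> faithful_ord G k \<rho>"
proof -
  from pG have grp: "group G" and fin: "finite (carrier G)" unfolding p_group_def by auto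
  obtain z where z: "z \<in> grp_center G" "z \<noteq> \<one>" using nontrivial_center_elementE[OF pG center] .
  have zG: "z \<in> carrier G" using z(1) grp_center_subset[of G] by blast
  obtain \<tau> where rep_\<tau>: "ord_rep G n \<tau>" and faithful_\<tau>: "faithful_proj G n \<tau>"
    and diag: "diagonal_mat (\<tau> z)"
    using group.ord_rep_diagonalize[OF grp fin rep faithful zG] .
  have "\<tau> z \<in> carrier_mat n n" using rep_\<tau> zG unfolding ord_rep_def by blast
  moreover have "\<forall>c. \<tau> z \<noteq> c \<cdot>\<^sub>m 1\<^sub>m n"
    using faithful_\<tau> zG z(2) unfolding faithful_proj_def by blast
  ultimately obtain c where c: "c \<noteq> 1" and S: "{i. i < n \<and> \<tau> z $$ (i,i) = c} \<noteq> {}"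
    "card {i. i < n \<and> \<tau> z $$ (i,i) = c} < n"
    using nonscalar_diagonal_mat_eigenvalueE[OF diag] by blast
  define S where "S = {i. i < n \<and> \<tau> z $$ (i,i) = c}"
  have rep_S: "ord_rep G (card S) (\<lambda>g. submatrix (\<tau> g) S S)"
    and scalar: "submatrix (\<tau> z) S S = c \<cdot>\<^sub>m 1\<^sub>m (card S)"
    using ord_rep_restrict_eigencoordinates[OF rep_\<tau> z(1) diag S_def] S unfolding S_def by blast+
  have "card S > 0" using rep_S unfolding ord_rep_def by simp
  then have "(c \<cdot>\<^sub>m 1\<^sub>m (card S)) $$ (0,0) \<noteq> (1\<^sub>m (card S) :: complex mat) $$ (0,0)"
    using c by simp
  then have "submatrix (\<tau> z) S S \<noteq> 1\<^sub>m (card S)" unfolding scalar by metis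
  then have "faithful_ord G (card S) (\<lambda>g. submatrix (\<tau> g) S S)"
    by (rule faithful_ord_if_center_not_in_kernel[OF pG center rep_S z(1)])
  then show ?thesis using rep_S S(2)[folded S_def] by blast
qed

lemma (in group) tau_le_Suc_delta:
  assumes fin: "finite (carrier G)"
  shows "tau G \<le> delta G + 1"
proof -
  have "\<exists>\<rho>. ord_rep G (delta G) \<rho> \<and> faithful_ord G (delta G) \<rho>"
    unfolding delta_def using ex_faithful_ord_rep[OF fin] by (rule LeastI_ex)
  then obtain \<rho> where "ord_rep G (delta G) \<rho>" "faithful_ord G (delta G) \<rho>" by blast
  then have "\<exists>\<rho>'. proj_rep G (delta G + 1) \<rho>' \<and> faithful_proj G (delta G + 1) \<rho>'"
    by (rule faithful_proj_rep_of_faithful_ord_rep)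
  then show ?thesis unfolding tau_def by (rule Least_le)
qed

lemma delta_less_tau:
  fixes G (structure)
  assumes pG: "p_group G p" and schur: "trivial_schur_multiplier G"
    and center: "card (grp_center G) = p"
  shows "delta G < tau G"
proof -
  from pG have grp: "group G" and fin: "finite (carrier G)" unfolding p_group_def by auto
  obtain n \<rho>\<^sub>0 where "ord_rep G n \<rho>\<^sub>0" "faithful_ord G n \<rho>\<^sub>0"
    using group.ex_faithful_ord_rep[OF grp fin] by blast
  then have "\<exists>\<rho>. proj_rep G (n + 1) \<rho> \<and> faithful_proj G (n + 1) \<rho>"
    by (rule group.faithful_proj_rep_of_faithful_ord_rep[OF grp])
  then have "\<exists>\<rho>. proj_rep G (tau G) \<rho> \<and> faithful_proj G (tau G) \<rho>"
    unfolding tau_def by (rule LeastI)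
  then obtain \<rho> where proj: "proj_rep G (tau G) \<rho>" and faithful: "faithful_proj G (tau G) \<rho>"
    by blast
  obtain \<beta> \<sigma> where rep: "ord_rep G (tau G) \<sigma>"
    and "\<forall>g\<in>carrier G. \<beta> g \<noteq> 0 \<and> \<rho> g = \<beta> g \<cdot>\<^sub>m \<sigma> g"
    using group.proj_rep_linearize[OF grp schur proj] .
  then have "\<forall>g\<in>carrier G. \<rho> g = \<beta> g \<cdot>\<^sub>m \<sigma> g" by blast
  then have "faithful_proj G (tau G) \<sigma>" using faithful by (rule faithful_proj_rescale)
  then obtain k \<rho>' where k: "k < tau G" and "ord_rep G k \<rho>'" "faithful_ord G k \<rho>'"
    using smaller_faithful_ord_rep[OF pG center rep] by blast
  then have "delta G \<le> k" unfolding delta_def by (intro Least_le) blast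
  with k show ?thesis by simp
qed

theorem lemma4p2:
  fixes G :: "('a, 'b) monoid_scheme" and p :: nat
  assumes "p_group G p"
    and "trivial_schur_multiplier G"
    and "card (grp_center G) = p"
  shows "\<not> (\<exists>n \<rho>. proj_rep G n \<rho> \<and> faithful_proj G n \<rho> \<and> irreducible_rep G n \<rho>)
         \<and> tau G = delta G + 1"
proof -
  have grp: "group G" and fin: "finite (carrier G)" using assms(1) unfolding p_group_def by auto
  obtain z where "z \<in> grp_center G" "z \<noteq> \<one>\<^bsub>G\<^esub>" using nontrivial_center_elementE[OF assms(1,3)] .
  then have "\<not> (\<exists>n \<rho>. proj_rep G n \<rho> \<and> faithful_proj G n \<rho> \<and> irreducible_rep G n \<rho>)"
    using group.no_faithful_irreducible_proj_rep[OF grp assms(2)] by blast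
  moreover have "tau G = delta G + 1"
    using group.tau_le_Suc_delta[OF grp fin] delta_less_tau[OF assms] by simp
  ultimately show ?thesis ..
qed

end
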